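(* If a graph $G$ contains a perfect matching, then $L(G)\le \frac{3}{2}\,l(G)$.
   Context: Graphs are finite, undirected, without loops or multiple edges. $\nu(G)$ denotes the maximum size of a matching of $G$; a matching is maximum if it has $\nu(G)$ edges. For $F\subseteq E(G)$, $G\setminus F$ is the graph with vertex set $V(G)$ and edge set $E(G)\setminus F$. Define $L(G)=\max\{\nu(G\setminus F): F \text{ a maximum matching of } G\}$ and $l(G)=\min\{\nu(G\setminus F): F \text{ a maximum matching of } G\}$. *)

theory Defs
  imports Complex_Main
begin

definition graph :: "'a set \<Rightarrow> 'a set set \<Rightarrow> bool" where
  "graph V E \<longleftrightarrow> finite V \<and> (\<forall>e\<in>E. \<exists>u v. e = {u, v} \<and> u \<noteq> v \<and> u \<in> V \<and> v \<in> V)"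

definition matching :: "'a set set \<Rightarrow> 'a set set \<Rightarrow> bool" where
  "matching E M \<longleftrightarrow> M \<subseteq> E \<and> (\<forall>e1\<in>M. \<forall>e2\<in>M. e1 \<noteq> e2 \<longrightarrow> e1 \<inter> e2 = {})"

definition nu :: "'a set set \<Rightarrow> nat" where
  "nu E = Max {card M | M. matching E M}"

definition max_matching :: "'a set set \<Rightarrow> 'a set set \<Rightarrow> bool" where
  "max_matching E M \<longleftrightarrow> matching E M \<and> card M = nu E"

definition perfect_matching :: "'a set \<Rightarrow> 'a set set \<Rightarrow> 'a set set \<Rightarrow> bool" where
  "perfect_matching V E M \<longleftrightarrow> matching E M \<and> \<Union>M = V"

text \<open>G \ F has the same vertex set and edge set E - F; its matching number
  depends only on the edge set.\<close>
definition L_num :: "'a set set \<Rightarrow> nat" where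
  "L_num E = Max {nu (E - F) | F. max_matching E F}"

definition l_num :: "'a set set \<Rightarrow> nat" where
  "l_num E = Min {nu (E - F) | F. max_matching E F}"

end

theory Submission
  imports Defs
begin

(* Let F1, F2 be maximum matchings with nu(E - F1) = l(G) and
   nu(E - F2) = L(G), and let M be a maximum matching of E - F2.  Since G has
   a perfect matching, every maximum matching is perfect, so F2 covers every
   vertex.  Split M into A = M \<inter> F1 and N = M - F1, let S be the vertices of A
   and T the edges of F2 meeting S.  The edges of T together with the edges
   Nu of N avoiding all vertices of T form a matching R of E - F1.  Counting
   vertices, the edges Nc = N - Nu satisfy |Nc| \<le> |V(T) - S| = 2|T| - 2|A| and
   |V(T) - S| \<le> |T| (each edge of T has an endpoint in S), whence
   2|M| \<le> 3|R| (the exchange lemma).  The theorem follows by taking M of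
   size L(G) and bounding |R| by l(G). *)

definition two_sets :: "'a set set \<Rightarrow> bool" where
  "two_sets E \<longleftrightarrow> (\<forall>e\<in>E. card e = 2)"

lemma graph_two_sets: "graph V E \<Longrightarrow> two_sets E"
  unfolding graph_def two_sets_def by auto

lemma graph_finite_edges:
  assumes "graph V E"
  shows "finite E" and "\<Union>E \<subseteq> V"
proof -
  show "\<Union>E \<subseteq> V" using assms unfolding graph_def by fastforce
  then have "E \<subseteq> Pow V" by blast
  then show "finite E" using assms finite_subset unfolding graph_def by blast
qed

lemma matching_disjoint: "matching E M \<Longrightarrow> pairwise disjnt M"
  unfolding matching_def pairwise_def disjnt_def by blast

lemma matching_finite: "finite E \<Longrightarrow> matching E M \<Longrightarrow> finite M"
  unfolding matching_def by (auto intro: finite_subset)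

lemma matching_mono: "matching E M \<Longrightarrow> M' \<subseteq> M \<Longrightarrow> matching E M'"
  unfolding matching_def by (meson subset_trans subsetD)

lemma matching_meet_eq:
  "matching E M \<Longrightarrow> e1 \<in> M \<Longrightarrow> e2 \<in> M \<Longrightarrow> e1 \<inter> e2 \<noteq> {} \<Longrightarrow> e1 = e2"
  unfolding matching_def by auto

lemma card_Union_matching:
  assumes "two_sets E" "matching E X" "finite X"
  shows "card (\<Union>X) = 2 * card X"
proof -
  have two: "\<And>x. x \<in> X \<Longrightarrow> card x = 2"
    using assms(1,2) unfolding two_sets_def matching_def by blast
  then have "\<And>x. x \<in> X \<Longrightarrow> finite x" by (metis card_eq_0_iff zero_neq_numeral)
  then have "card (\<Union>X) = sum card X"
    using card_Union_disjoint matching_disjoint[OF assms(2)] by blast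
  also have "\<dots> = 2 * card X" using two by simp
  finally show ?thesis .
qed

lemma matching_Un:
  assumes "matching E X" "matching E Y" "\<Union>X \<inter> \<Union>Y = {}"
  shows "matching E (X \<union> Y)"
  unfolding matching_def
proof (intro conjI ballI impI)
  show "X \<union> Y \<subseteq> E" using assms(1,2) unfolding matching_def by simp
  fix e1 e2 assume e: "e1 \<in> X \<union> Y" "e2 \<in> X \<union> Y" "e1 \<noteq> e2"
  have "e1 \<inter> e2 \<subseteq> \<Union>X \<inter> \<Union>Y" if "e1 \<in> X" "e2 \<in> Y" for e1 e2
    using that by blast
  then show "e1 \<inter> e2 = {}"
    using assms e unfolding matching_def by (metis Int_commute Un_iff subset_empty)
qed

text \<open>Pairwise disjoint sets that all meet a finite set W are at most |W| many:
  picking a point of W in each of them is injective.\<close>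
lemma card_disjoint_family_meeting_le:
  assumes "pairwise disjnt X" "finite W" "\<And>e. e \<in> X \<Longrightarrow> e \<inter> W \<noteq> {}"
  shows "card X \<le> card W"
proof -
  define pick where "pick e = (SOME w. w \<in> e \<inter> W)" for e
  have pick: "pick e \<in> e \<inter> W" if "e \<in> X" for e
    using assms(3)[OF that] unfolding pick_def by (metis ex_in_conv someI)
  have "inj_on pick X"
  proof (rule inj_onI)
    fix x y assume x: "x \<in> X" and y: "y \<in> X" and same: "pick x = pick y"
    have "pick x \<in> x \<inter> y" using pick[OF x] pick[OF y] same by simp
    then have "\<not> disjnt x y" unfolding disjnt_def by blast
    then show "x = y" using assms(1) x y by (meson pairwiseD)
  qed
  moreover have "pick ` X \<subseteq> W" using pick by auto
  ultimately show ?thesis using card_inj_on_le assms(2) by blast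
qed

text \<open>If every edge of T meets S, each edge contributes at most one vertex
  outside S.\<close>
lemma card_Union_Diff_le:
  assumes "finite T" "two_sets T" "\<And>t. t \<in> T \<Longrightarrow> t \<inter> S \<noteq> {}"
  shows "card (\<Union>T - S) \<le> card T"
proof -
  have one: "card (t - S) \<le> 1" if "t \<in> T" for t
  proof -
    have "card t = 2" using assms(2) that unfolding two_sets_def by blast
    then have "finite t" by (metis card_eq_0_iff zero_neq_numeral)
    moreover have "card (t \<inter> S) \<ge> 1"
      using assms(3)[OF that] \<open>finite t\<close> by (simp add: Suc_leI card_gt_0_iff)
    ultimately show ?thesis using \<open>card t = 2\<close> by (simp add: card_Diff_subset_Int)
  qed
  have "card (\<Union>T - S) = card (\<Union>t\<in>T. t - S)" by (rule arg_cong[where f=card]) blast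
  also have "\<dots> \<le> (\<Sum>t\<in>T. card (t - S))" using card_UN_le[OF assms(1)] .
  also have "\<dots> \<le> (\<Sum>t\<in>T. 1)" using one by (rule sum_mono)
  finally show ?thesis by simp
qed

lemma matching_sizes_finite_nonempty:
  assumes "finite E"
  shows "finite {card M | M. matching E M}" "{card M | M. matching E M} \<noteq> {}"
proof -
  have "{card M | M. matching E M} \<subseteq> card ` Pow E" unfolding matching_def by auto
  then show "finite {card M | M. matching E M}" using assms finite_subset by blast
  have "matching E {}" unfolding matching_def by auto
  then show "{card M | M. matching E M} \<noteq> {}" by blast
qed

lemma nu_ge: "finite E \<Longrightarrow> matching E M \<Longrightarrow> card M \<le> nu E"
  unfolding nu_def using matching_sizes_finite_nonempty by (intro Max_ge) auto

lemma nu_attained: "finite E \<Longrightarrow> \<exists>M. max_matching E M"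
proof -
  assume "finite E"
  then have "nu E \<in> {card M | M. matching E M}"
    unfolding nu_def using matching_sizes_finite_nonempty by (intro Max_in)
  then show ?thesis unfolding max_matching_def by auto
qed

lemma L_l_attained:
  assumes "finite E"
  shows "\<exists>F. max_matching E F \<and> L_num E = nu (E - F)"
    and "\<exists>F. max_matching E F \<and> l_num E = nu (E - F)"
proof -
  define X where "X = {nu (E - F) | F. max_matching E F}"
  have "X \<subseteq> (\<lambda>F. nu (E - F)) ` Pow E"
    unfolding X_def max_matching_def matching_def by auto
  then have "finite X" using assms finite_subset by blast
  moreover have "X \<noteq> {}" using nu_attained[OF assms] unfolding X_def by blast
  ultimately have "Max X \<in> X" "Min X \<in> X" by simp_all
  then show "\<exists>F. max_matching E F \<and> L_num E = nu (E - F)"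
    and "\<exists>F. max_matching E F \<and> l_num E = nu (E - F)"
    unfolding L_num_def l_num_def X_def by auto
qed

lemma max_matching_perfect:
  assumes G: "graph V E" and P: "perfect_matching V E M0" and F: "max_matching E F"
  shows "\<Union>F = V"
proof -
  have fE: "finite E" and EV: "\<Union>E \<subseteq> V" using graph_finite_edges[OF G] by auto
  have M0: "matching E M0" "\<Union>M0 = V" using P unfolding perfect_matching_def by auto
  have F': "matching E F" "card F = nu E" using F unfolding max_matching_def by auto
  have tw: "two_sets E" using graph_two_sets[OF G] .
  have "card V = 2 * card M0"
    using card_Union_matching[OF tw M0(1) matching_finite[OF fE M0(1)]] M0(2) by simp
  also have "\<dots> \<le> 2 * card F" using nu_ge[OF fE M0(1)] F' by simp
  also have "\<dots> = card (\<Union>F)"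
    using card_Union_matching[OF tw F'(1) matching_finite[OF fE F'(1)]] by simp
  finally have "card V \<le> card (\<Union>F)" .
  moreover have "\<Union>F \<subseteq> V" using F' EV unfolding matching_def by blast
  ultimately show ?thesis using G unfolding graph_def by (meson card_seteq)
qed

text \<open>If F2 is a matching covering all vertices,
  then 2|M| \<le> 3(|T| + |Nu|): the remaining edges Nc of M - F1 avoid S but meet
  the vertices of T, of which there are 2|T| - 2|A| outside S, and at most |T|.\<close>
lemma exchange_count:
  fixes E F1 F2 M :: "'a set set"
  assumes tw: "two_sets E" and fE: "finite E"
    and F2: "matching E F2" and cover: "\<Union>E \<subseteq> \<Union>F2" and M: "matching E M"
  defines "S \<equiv> \<Union>(M \<inter> F1)"
  defines "T \<equiv> {t\<in>F2. t \<inter> S \<noteq> {}}"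
  defines "Nu \<equiv> {e\<in>M - F1. e \<inter> \<Union>T = {}}"
  shows "2 * card M \<le> 3 * (card T + card Nu)"
proof -
  define Nc where "Nc = (M - F1) - Nu"
  have fM: "finite M" using matching_finite[OF fE M] .
  have fT: "finite T" using matching_finite[OF fE F2] unfolding T_def by simp
  have mT: "matching E T" using matching_mono[OF F2] unfolding T_def by auto
  have twT: "two_sets T" using tw mT unfolding two_sets_def matching_def by auto
  have fU: "finite (\<Union>T)"
    using fT twT unfolding two_sets_def by (metis card.infinite finite_Union zero_neq_numeral)
  have cardM: "card M = card Nu + card Nc + card (M \<inter> F1)"
  proof -
    have "M = (Nu \<union> Nc) \<union> (M \<inter> F1)" "Nu \<inter> Nc = {}" "(Nu \<union> Nc) \<inter> (M \<inter> F1) = {}"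
      unfolding Nc_def Nu_def by auto
    moreover have "finite Nu" "finite Nc" "finite (M \<inter> F1)"
      using fM unfolding Nc_def Nu_def by auto
    ultimately show ?thesis by (metis card_Un_disjoint finite_UnI)
  qed
  have cardS: "card S = 2 * card (M \<inter> F1)"
    unfolding S_def using card_Union_matching[OF tw matching_mono[OF M]] fM by simp
  have cardT: "card (\<Union>T) = 2 * card T" using card_Union_matching[OF tw mT fT] .
  text \<open>Every vertex of S is covered by F2, hence by an edge of T.\<close>
  have S_sub: "S \<subseteq> \<Union>T"
  proof
    fix s assume s: "s \<in> S"
    then have "s \<in> \<Union>E" using M unfolding S_def matching_def by auto
    then obtain t where "t \<in> F2" "s \<in> t" using cover by auto
    then show "s \<in> \<Union>T" using s unfolding T_def by auto
  qed
  have avoids_S: "e \<inter> S = {}" if e: "e \<in> M - F1" for e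
  proof -
    have "e \<inter> a = {}" if "a \<in> M \<inter> F1" for a
      using matching_meet_eq[OF M] e that by blast
    then show ?thesis unfolding S_def by auto
  qed
  have "card Nc \<le> card (\<Union>T - S)"
  proof (rule card_disjoint_family_meeting_le)
    have "Nc \<subseteq> M" unfolding Nc_def by auto
    then show "pairwise disjnt Nc" using pairwise_subset matching_disjoint[OF M] by blast
    show "finite (\<Union>T - S)" using fU by simp
    show "e \<inter> (\<Union>T - S) \<noteq> {}" if "e \<in> Nc" for e
      using that avoids_S[of e] unfolding Nc_def Nu_def by auto
  qed
  moreover have "card (\<Union>T - S) \<le> card T"
    by (rule card_Union_Diff_le[OF fT twT]) (simp add: T_def)
  moreover have "card (\<Union>T - S) + card S = card (\<Union>T)"
    using S_sub fU by (metis card_Diff_subset card_mono finite_subset le_add_diff_inverse2)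
  ultimately show ?thesis using cardM cardS cardT by (simp add: distrib_left)
qed

text \<open>An edge of T meets an
  edge a of M \<inter> F1; were it in F1 it would equal a, which lies in M, not in F2.\<close>
lemma exchange_matching:
  fixes E F1 F2 M :: "'a set set"
  assumes tw: "two_sets E" and fE: "finite E"
    and F1: "matching E F1" and F2: "matching E F2" and M: "matching (E - F2) M"
  defines "S \<equiv> \<Union>(M \<inter> F1)"
  defines "T \<equiv> {t\<in>F2. t \<inter> S \<noteq> {}}"
  defines "Nu \<equiv> {e\<in>M - F1. e \<inter> \<Union>T = {}}"
  shows "matching (E - F1) (T \<union> Nu)" and "card (T \<union> Nu) = card T + card Nu"
proof -
  have mT: "matching E T" using matching_mono[OF F2] unfolding T_def by auto
  have T_avoids_F1: "t \<notin> F1" if t: "t \<in> T" for t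
  proof
    assume "t \<in> F1"
    obtain a where a: "a \<in> M \<inter> F1" "t \<inter> a \<noteq> {}" using t unfolding T_def S_def by auto
    then have "t = a" using matching_meet_eq[OF F1] \<open>t \<in> F1\<close> by blast
    then show False using a t M unfolding T_def matching_def by auto
  qed
  show "matching (E - F1) (T \<union> Nu)"
  proof (rule matching_Un)
    show "matching (E - F1) T" using mT T_avoids_F1 unfolding matching_def by auto
    show "matching (E - F1) Nu" using M unfolding Nu_def matching_def by auto
    show "\<Union>T \<inter> \<Union>Nu = {}" unfolding Nu_def by auto
  qed
  show "card (T \<union> Nu) = card T + card Nu"
  proof (rule card_Un_disjoint)
    show "finite T" using matching_finite[OF fE mT] .
    show "finite Nu" using matching_finite[OF _ M] fE unfolding Nu_def by auto
    have "t \<noteq> {}" if "t \<in> T" for t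
      using tw mT that unfolding two_sets_def matching_def by fastforce
    then show "T \<inter> Nu = {}" unfolding Nu_def by auto
  qed
qed

lemma exchange:
  assumes tw: "two_sets E" and fE: "finite E"
    and F1: "matching E F1" and F2: "matching E F2" and cover: "\<Union>E \<subseteq> \<Union>F2"
    and M: "matching (E - F2) M"
  shows "\<exists>R. matching (E - F1) R \<and> 2 * card M \<le> 3 * card R"
proof -
  have "matching E M" using M unfolding matching_def by auto
  from exchange_count[OF tw fE F2 cover this, of F1] exchange_matching[OF tw fE F1 F2 M]
  show ?thesis by auto
qed

theorem theorem2:
  fixes V :: "'a set" and E :: "'a set set"
  assumes "graph V E"
    and "\<exists>M. perfect_matching V E M"
  shows "real (L_num E) \<le> 3 / 2 * real (l_num E)"
proof -
  have fE: "finite E" and EV: "\<Union>E \<subseteq> V" using graph_finite_edges[OF assms(1)] by auto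
  obtain F1 where F1: "max_matching E F1" "l_num E = nu (E - F1)"
    using L_l_attained(2)[OF fE] by blast
  obtain F2 where F2: "max_matching E F2" "L_num E = nu (E - F2)"
    using L_l_attained(1)[OF fE] by blast
  obtain M where M: "max_matching (E - F2) M" using nu_attained fE by blast
  have "\<Union>E \<subseteq> \<Union>F2" using max_matching_perfect[OF assms(1) _ F2(1)] assms(2) EV by auto
  then obtain R where R: "matching (E - F1) R" "2 * card M \<le> 3 * card R"
    using exchange[OF graph_two_sets[OF assms(1)] fE] F1(1) F2(1) M
    unfolding max_matching_def by blast
  have "card R \<le> l_num E" using nu_ge[of "E - F1" R] fE R(1) F1(2) by auto
  then have "2 * L_num E \<le> 3 * l_num E"
    using R(2) M F2(2) unfolding max_matching_def by linarith
  then show ?thesis by linarith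
qed

end
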